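(* For $t\in(0,1)$ and $n\ge1$, $$(t-\alpha_n)(r_{n+1}-r_n)=\beta_{n+1}R_{n+1}-\beta_nR_{n-1},$$ $$(1-\alpha_n)(y_n-y_{n+1})=\beta_nx_{n-1}-\beta_{n+1}x_{n+1},$$ $$-\alpha_n(y_{n+1}-y_n+r_n-r_{n+1}-1)=\beta_{n+1}x_{n+1}-\beta_nx_{n-1}+\beta_nR_{n-1}-\beta_{n+1}R_{n+1}.$$
   Context: Fix $\alpha>0$, $\beta>0$, and real $A,B$ with $A\ge0$, $A+B\ge0$, not both zero; $\theta$ is the Heaviside step function. For $t\in(0,1)$ let $w(x;t)=x^\alpha(1-x)^\beta(A+B\theta(x-t))$ on $[0,1]$, and let $P_n(x)=P_n(x;t)=x^n+\mathsf p_1(n,t)x^{n-1}+\cdots$ be the monic orthogonal polynomials: $\int_0^1P_iP_jw\,dx=h_i(t)\delta_{ij}$, $h_i>0$, satisfying $xP_n=P_{n+1}+\alpha_nP_n+\beta_nP_{n-1}$, $P_{-1}=0$, $\beta_n=h_n/h_{n-1}$, $\mathsf p_1(0,t)=0$. Define $R_n(t)=B\,t^\alpha(1-t)^\beta P_n(t;t)^2/h_n$, $r_n(t)=B\,t^\alpha(1-t)^\beta P_n(t;t)P_{n-1}(t;t)/h_{n-1}$ ($r_0=0$), $x_n(t)=\frac{\beta}{h_n}\int_0^1\frac{P_n(y)^2}{1-y}\,y^\alpha(1-y)^\beta(A+B\theta(y-t))\,dy$, $y_n(t)=\frac{\beta}{h_{n-1}}\int_0^1\frac{P_n(y)P_{n-1}(y)}{1-y}\,y^\alpha(1-y)^\beta(A+B\theta(y-t))\,dy$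 ($y_0=0$). *)

theory Defs
  imports "HOL-Analysis.Analysis" "HOL-Computational_Algebra.Polynomial"
begin

definition heaviside :: "real \<Rightarrow> real" where
  "heaviside s = (if s \<ge> 0 then 1 else 0)"

definition wt :: "real \<Rightarrow> real \<Rightarrow> real \<Rightarrow> real \<Rightarrow> real \<Rightarrow> real \<Rightarrow> real" where
  "wt al be A B t x = x powr al * (1 - x) powr be * (A + B * heaviside (x - t))"

definition ip :: "real \<Rightarrow> real \<Rightarrow> real \<Rightarrow> real \<Rightarrow> real \<Rightarrow> real poly \<Rightarrow> real poly \<Rightarrow> real" where
  "ip al be A B t p q = (LINT x:{0..1}|lborel. poly p x * poly q x * wt al be A B t x)"

definition is_mop :: "real \<Rightarrow> real \<Rightarrow> real \<Rightarrow> real \<Rightarrow> real \<Rightarrow> nat \<Rightarrow> real poly \<Rightarrow> bool" where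
  "is_mop al be A B t n p \<longleftrightarrow> degree p = n \<and> lead_coeff p = 1 \<and>
     (\<forall>q. degree q < n \<longrightarrow> ip al be A B t p q = 0)"

definition OP :: "real \<Rightarrow> real \<Rightarrow> real \<Rightarrow> real \<Rightarrow> real \<Rightarrow> nat \<Rightarrow> real poly" where
  "OP al be A B t n = (THE p. is_mop al be A B t n p)"

definition hh :: "real \<Rightarrow> real \<Rightarrow> real \<Rightarrow> real \<Rightarrow> real \<Rightarrow> nat \<Rightarrow> real" where
  "hh al be A B t n = ip al be A B t (OP al be A B t n) (OP al be A B t n)"

definition OPm1 :: "real \<Rightarrow> real \<Rightarrow> real \<Rightarrow> real \<Rightarrow> real \<Rightarrow> nat \<Rightarrow> real poly" where
  "OPm1 al be A B t n = (if n = 0 then 0 else OP al be A B t (n - 1))"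

text \<open>Recurrence coefficients: x P_n = P_{n+1} + alpha_n P_n + beta_n P_{n-1}, beta_n = h_n/h_{n-1}.\<close>
definition rbeta :: "real \<Rightarrow> real \<Rightarrow> real \<Rightarrow> real \<Rightarrow> real \<Rightarrow> nat \<Rightarrow> real" where
  "rbeta al be A B t n = hh al be A B t n / hh al be A B t (n - 1)"

definition ralpha :: "real \<Rightarrow> real \<Rightarrow> real \<Rightarrow> real \<Rightarrow> real \<Rightarrow> nat \<Rightarrow> real" where
  "ralpha al be A B t n = (THE a. \<exists>b. [:0, 1:] * OP al be A B t n =
      OP al be A B t (Suc n) + smult a (OP al be A B t n) + smult b (OPm1 al be A B t n))"

definition RR :: "real \<Rightarrow> real \<Rightarrow> real \<Rightarrow> real \<Rightarrow> real \<Rightarrow> nat \<Rightarrow> real" where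
  "RR al be A B t n = B * t powr al * (1 - t) powr be * (poly (OP al be A B t n) t)\<^sup>2
      / hh al be A B t n"

definition rr :: "real \<Rightarrow> real \<Rightarrow> real \<Rightarrow> real \<Rightarrow> real \<Rightarrow> nat \<Rightarrow> real" where
  "rr al be A B t n = (if n = 0 then 0 else
     B * t powr al * (1 - t) powr be * poly (OP al be A B t n) t * poly (OP al be A B t (n - 1)) t
      / hh al be A B t (n - 1))"

definition xx :: "real \<Rightarrow> real \<Rightarrow> real \<Rightarrow> real \<Rightarrow> real \<Rightarrow> nat \<Rightarrow> real" where
  "xx al be A B t n = be / hh al be A B t n *
     (LINT y:{0..1}|lborel. (poly (OP al be A B t n) y)\<^sup>2 / (1 - y) * wt al be A B t y)"

definition yy :: "real \<Rightarrow> real \<Rightarrow> real \<Rightarrow> real \<Rightarrow> real \<Rightarrow> nat \<Rightarrow> real" where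
  "yy al be A B t n = (if n = 0 then 0 else be / hh al be A B t (n - 1) *
     (LINT y:{0..1}|lborel. poly (OP al be A B t n) y * poly (OP al be A B t (n - 1)) y / (1 - y)
        * wt al be A B t y))"

end

theory Submission
  imports Defs
begin

(*
  Write I(p) = \<integral> p w and J(p) = \<integral> p w / (1 - x) over [0,1].
  (1) w is bounded and w/(1-x) is dominated by (1-x)^(be-1), so I and J are finite
      linear functionals on polynomials; the form <p,q> = I(p q) is positive definite.
  (2) Gram-Schmidt yields a unique monic orthogonal P_n of every degree; comparing
      coefficients gives the three-term recurrence x P_n = P_{n+1} + al_n P_n + be_n P_{n-1}
      with al_n = p1(n) - p1(n+1), p1(n) the subleading coefficient of P_n.
  (3) The first identity is the recurrence evaluated at x = t.
  (4) The second follows from J((1-x) p) = I(p) applied to P_n (be_n P_{n-1} - P_{n+1}).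
  (5) Integration by parts against x^(al+1)(1-x)^be, whose derivative produces the
      jump term B t^(al+1)(1-t)^be g(t), gives y_n = t r_n - p1(n); together with
      al_n = p1(n) - p1(n+1) and the first two identities this yields the third.
*)

lemma heaviside_measurable[measurable]: "heaviside \<in> borel_measurable borel"
  unfolding heaviside_def by measurable

text \<open>The endpoint singularity (1-y)^(be-1) is integrable for be > 0; it dominates
  the integrand of J.\<close>
lemma integrable_one_minus_powr:
  fixes be :: real
  assumes "be > 0"
  shows "set_integrable lborel {0..1} (\<lambda>y. (1 - y) powr (be - 1))"
proof -
  have deriv: "((\<lambda>y. -((1 - y) powr be / be)) has_vector_derivative (1 - y) powr (be - 1)) (at y)"
    if "y \<in> {0<..<1}" for y
  proof -
    have "((\<lambda>y. -((1 - y) powr be / be)) has_real_derivative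
        -((be * (1 - y) powr (be - 1) * (-1)) / be)) (at y)"
      using that by (auto intro!: derivative_eq_intros)
    then show ?thesis using assms by (simp add: has_real_derivative_iff_has_vector_derivative)
  qed
  have cont: "continuous_on {0..1} (\<lambda>y::real. -((1 - y) powr be / be))"
    using assms by (intro continuous_intros continuous_on_powr') auto
  have "(\<lambda>y. (1 - y) powr (be - 1)) integrable_on {0..1::real}"
    using fundamental_theorem_of_calculus_interior[OF _ cont deriv] by auto
  then have "(\<lambda>y. (1 - y) powr (be - 1)) absolutely_integrable_on {0..1::real}"
    by (rule nonnegative_absolutely_integrable_1) auto
  then show ?thesis
    unfolding set_integrable_def by (subst (asm) integrable_completion) auto
qed

lemma poly_bounded_on_unit_interval:
  fixes p :: "real poly" shows "\<exists>M\<ge>0. \<forall>y\<in>{0..1}. \<bar>poly p y\<bar> \<le> M"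
proof -
  have "compact (poly p ` {0..1::real})"
    by (intro compact_continuous_image continuous_intros) auto
  then obtain M where "M > 0" "\<forall>x\<in>poly p ` {0..1}. norm x \<le> M"
    using compact_imp_bounded bounded_pos by metis
  then show ?thesis by (intro exI[of _ M]) auto
qed

lemma degree_less_if_high_coeffs_zero:
  "(\<forall>k\<ge>n. coeff q k = 0) \<Longrightarrow> q = 0 \<or> degree q < n"
  by (metis leading_coeff_0_iff not_le)

text \<open>Multiplication by x (which the simplifier normalizes to pCons 0) shifts
  coefficients; the Euler operator x d/dx scales them.\<close>
lemma coeff_pCons_0:
  "coeff (pCons 0 p) k = (if k = 0 then 0 else coeff p (k - 1))"
  by (cases k) simp_all

lemma coeff_x_pderiv:
  "coeff (pCons 0 (pderiv (q :: 'a :: {comm_semiring_1, semiring_no_zero_divisors} poly))) k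
     = of_nat k * coeff q k"
  by (cases k) (simp_all add: coeff_pderiv)

text \<open>Derivative of u(y) = y^(al+1) (1-y)^be g(y) on (0,1), written so that it splits into
  a polynomial times y^al (1-y)^be and a multiple of g(y) y^al (1-y)^be / (1-y).\<close>
lemma jacobi_antiderivative_deriv:
  fixes g :: "real poly" and al be y :: real
  assumes y: "0 < y" "y < 1"
  shows "((\<lambda>y. y powr (al + 1) * (1 - y) powr be * poly g y) has_real_derivative
     (poly (smult (1 + al + be) g + [:0, 1:] * pderiv g) y * y powr al * (1 - y) powr be
       - be * (poly g y / (1 - y) * (y powr al * (1 - y) powr be)))) (at y)"
proof -
  have "((\<lambda>y. y powr (al + 1) * (1 - y) powr be * poly g y) has_real_derivative
     ((al + 1) * y powr (al + 1 - 1) * 1 * (1 - y) powr be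
        + y powr (al + 1) * (be * (1 - y) powr (be - 1) * (0 - 1))) * poly g y
      + y powr (al + 1) * (1 - y) powr be * poly (pderiv g) y) (at y)"
    using y by (auto intro!: derivative_eq_intros)
  moreover have "y powr (al + 1) = y * y powr al" using y by (simp add: powr_add)
  moreover have "(1 - y) powr (be - 1) = (1 - y) powr be / (1 - y)" using y by (simp add: powr_diff)
  moreover have "1 - y \<noteq> 0" using y by simp
  ultimately show ?thesis by (simp add: field_simps)
qed

text \<open>Fundamental theorem of calculus against the step weight A + B H(y - t): if u vanishes
  at 0 and 1, only the jump at t contributes.\<close>
lemma has_integral_jump_weight:
  fixes u F :: "real \<Rightarrow> real" and A B t :: real
  assumes t: "0 < t" "t < 1" and cont: "continuous_on {0..1} u"
    and deriv: "\<And>y. y \<in> {0<..<1} \<Longrightarrow> (u has_real_derivative F y) (at y)"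
    and ends: "u 0 = 0" "u 1 = 0"
  shows "((\<lambda>y. F y * (A + B * heaviside (y - t))) has_integral (- B * u t)) {0..1}"
proof -
  have deriv': "(u has_vector_derivative F y) (at y)" if "y \<in> {0<..<1}" for y
    using deriv[OF that] by (simp add: has_real_derivative_iff_has_vector_derivative)
  have "(F has_integral (u t - u 0)) {0..t}"
    using t by (intro fundamental_theorem_of_calculus_interior continuous_on_subset[OF cont] deriv') auto
  then have left: "((\<lambda>y. F y * (A + B * heaviside (y - t))) has_integral (u t * A)) {0..t}"
    using ends by (intro has_integral_spike_finite[of "{t}", OF _ _ has_integral_mult_left])
      (auto simp: heaviside_def)
  have "(F has_integral (u 1 - u t)) {t..1}"
    using t by (intro fundamental_theorem_of_calculus_interior continuous_on_subset[OF cont] deriv') auto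
  then have right: "((\<lambda>y. F y * (A + B * heaviside (y - t))) has_integral (- u t * (A + B))) {t..1}"
    using ends by (intro has_integral_spike_finite[of "{}", OF _ _ has_integral_mult_left])
      (auto simp: heaviside_def)
  show ?thesis
    using has_integral_combine[OF _ _ left right] t by (simp add: algebra_simps)
qed

text \<open>The identities are obtained from the underlying relations by the following
  rearrangements over a field; the h's stand for the (positive) norms h_(n-1), h_n, h_(n+1).\<close>

text \<open>From the recurrence at t, b d a being P_n(t), P_(n+1)(t), P_(n-1)(t).\<close>
lemma rearrange_first:
  fixes a b c d t al h0 h1 h2 :: real
  assumes "h0 > 0" "h1 > 0" "h2 > 0" and rec: "t * b = d + al * b + h1 / h0 * a"
  shows "(t - al) * (c * d * b / h1 - c * b * a / h0)
           = h2 / h1 * (c * d\<^sup>2 / h2) - h1 / h0 * (c * a\<^sup>2 / h0)"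
proof -
  have d: "d = t * b - al * b - h1 / h0 * a" using rec by simp
  show ?thesis unfolding d using assms(1-3) by (simp add: field_simps power2_eq_square)
qed

text \<open>Rescaling of the J-integral identity to the normalized quantities x_k, y_k.\<close>
lemma rearrange_second:
  fixes al c h0 h1 h2 J0 J1 J2 J3 :: real
  assumes "h0 > 0" "h1 > 0" "h2 > 0"
    and key: "(1 - al) * (h1 / h0 * J1 - J2) = (h1 / h0)\<^sup>2 * J0 - J3"
  shows "(1 - al) * (c / h0 * J1 - c / h1 * J2) = h1 / h0 * (c / h0 * J0) - h2 / h1 * (c / h2 * J3)"
proof -
  have "(1 - al) * (c / h0 * J1 - c / h1 * J2) = c / h1 * ((1 - al) * (h1 / h0 * J1 - J2))"
    using assms(1-3) by (simp add: field_simps)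
  also have "\<dots> = c / h1 * ((h1 / h0)\<^sup>2 * J0 - J3)" using key by simp
  also have "\<dots> = h1 / h0 * (c / h0 * J0) - h2 / h1 * (c / h2 * J3)"
    using assms(1-3) by (simp add: field_simps power2_eq_square)
  finally show ?thesis .
qed

text \<open>The third identity is the difference of the first two once al_n is expressed
  through the increments of y and r.\<close>
lemma rearrange_third:
  fixes al t y0 y1 r0 r1 x0 x1 R0 R1 :: real
  assumes "(t - al) * (r1 - r0) = R1 - R0"
    and "(1 - al) * (y0 - y1) = x0 - x1"
    and "al = (y1 - y0) - t * (r1 - r0)"
  shows "- al * (y1 - y0 + r0 - r1 - 1) = x1 - x0 + R0 - R1"
  using assms by algebra

section \<open>The weight and its moment functionals\<close>

locale jump_jacobi =
  fixes al be A B t :: real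
  assumes al: "al > 0" and be: "be > 0" and A: "A \<ge> 0" and AB: "A + B \<ge> 0"
    and nonzero: "\<not> (A = 0 \<and> B = 0)" and t0: "0 < t" and t1: "t < 1"
begin

abbreviation "w \<equiv> wt al be A B t"
abbreviation "ipw \<equiv> ip al be A B t"

lemma poly_measurable[measurable]: "poly (p :: real poly) \<in> borel_measurable borel"
  by (intro borel_measurable_continuous_onI continuous_intros)

lemma w_measurable[measurable]: "w \<in> borel_measurable borel"
  unfolding wt_def by measurable

lemma w_nonneg: "y \<in> {0..1} \<Longrightarrow> w y \<ge> 0"
  unfolding wt_def heaviside_def using A AB by auto

lemma w_at_1: "w 1 = 0"
  unfolding wt_def using be by simp

lemma jump_factor_bound: "\<bar>A + B * heaviside s\<bar> \<le> \<bar>A\<bar> + \<bar>B\<bar>"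
  unfolding heaviside_def by auto

lemma w_bound: "y \<in> {0..1} \<Longrightarrow> \<bar>w y\<bar> \<le> \<bar>A\<bar> + \<bar>B\<bar>"
proof -
  assume y: "y \<in> {0..1}"
  have a: "0 \<le> y powr al" "y powr al \<le> 1" using y al by (auto intro: powr_le1)
  have b: "0 \<le> (1 - y) powr be" "(1 - y) powr be \<le> 1" using y be by (auto intro: powr_le1)
  have "\<bar>w y\<bar> = y powr al * (1 - y) powr be * \<bar>A + B * heaviside (y - t)\<bar>"
    unfolding wt_def using a b by (simp add: abs_mult)
  also have "\<dots> \<le> 1 * 1 * (\<bar>A\<bar> + \<bar>B\<bar>)"
    using a b jump_factor_bound by (intro mult_mono) auto
  finally show ?thesis by simp
qed

lemma w_div_bound:
  assumes "y \<in> {0..<1}"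
  shows "\<bar>w y / (1 - y)\<bar> \<le> (\<bar>A\<bar> + \<bar>B\<bar>) * (1 - y) powr (be - 1)"
proof -
  have a: "0 \<le> y powr al" "y powr al \<le> 1" using assms al by (auto intro: powr_le1)
  have "w y / (1 - y) = y powr al * (1 - y) powr (be - 1) * (A + B * heaviside (y - t))"
    using assms unfolding wt_def by (simp add: powr_diff)
  also have "\<bar>\<dots>\<bar> = y powr al * (1 - y) powr (be - 1) * \<bar>A + B * heaviside (y - t)\<bar>"
    using a by (simp add: abs_mult)
  also have "\<dots> \<le> 1 * (1 - y) powr (be - 1) * (\<bar>A\<bar> + \<bar>B\<bar>)"
    using a jump_factor_bound by (intro mult_mono) auto
  finally show ?thesis by (simp add: mult_ac)
qed

lemma integrable_poly_w: "set_integrable lborel {0..1} (\<lambda>y. poly p y * w y)"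
proof -
  obtain M where M: "M \<ge> 0" "\<forall>y\<in>{0..1}. \<bar>poly p y\<bar> \<le> M"
    using poly_bounded_on_unit_interval by blast
  show ?thesis
  proof (rule set_integrable_bound[where f = "\<lambda>_::real. M * (\<bar>A\<bar> + \<bar>B\<bar>)"])
    show "set_integrable lborel {0..1::real} (\<lambda>_. M * (\<bar>A\<bar> + \<bar>B\<bar>))"
      using borel_integrable_atLeastAtMost'[of 0 1 "\<lambda>_. M * (\<bar>A\<bar> + \<bar>B\<bar>)"] by simp
    show "set_borel_measurable lborel {0..1} (\<lambda>y. poly p y * w y)"
      unfolding set_borel_measurable_def by measurable
    show "AE x in lborel. x \<in> {0..1} \<longrightarrow> norm (poly p x * w x) \<le> norm (M * (\<bar>A\<bar> + \<bar>B\<bar>))"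
      using M w_bound by (auto simp: abs_mult intro!: mult_mono)
  qed
qed

lemma integrable_poly_w_div: "set_integrable lborel {0..1} (\<lambda>y. poly p y / (1 - y) * w y)"
proof -
  obtain M where M: "M \<ge> 0" "\<forall>y\<in>{0..1}. \<bar>poly p y\<bar> \<le> M"
    using poly_bounded_on_unit_interval by blast
  show ?thesis
  proof (rule set_integrable_bound[where f = "\<lambda>y. M * (\<bar>A\<bar> + \<bar>B\<bar>) * (1 - y) powr (be - 1)"])
    show "set_integrable lborel {0..1} (\<lambda>y. M * (\<bar>A\<bar> + \<bar>B\<bar>) * (1 - y) powr (be - 1))"
      using integrable_one_minus_powr[OF be] by (rule set_integrable_mult_right)
    show "set_borel_measurable lborel {0..1} (\<lambda>y. poly p y / (1 - y) * w y)"
      unfolding set_borel_measurable_def by measurable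
    have "\<bar>poly p x / (1 - x) * w x\<bar> \<le> M * (\<bar>A\<bar> + \<bar>B\<bar>) * (1 - x) powr (be - 1)"
      if x: "x \<in> {0..1}" for x
    proof (cases "x = 1")
      case False
      then have "\<bar>poly p x\<bar> * \<bar>w x / (1 - x)\<bar> \<le> M * ((\<bar>A\<bar> + \<bar>B\<bar>) * (1 - x) powr (be - 1))"
        using x M w_div_bound[of x] by (intro mult_mono) auto
      then show ?thesis by (simp add: abs_mult mult_ac)
    qed simp
    then show "AE x in lborel. x \<in> {0..1} \<longrightarrow> norm (poly p x / (1 - x) * w x) \<le>
        norm (M * (\<bar>A\<bar> + \<bar>B\<bar>) * (1 - x) powr (be - 1))"
      using M(1) by (intro AE_I2) (auto simp: abs_mult)
  qed
qed

lemma ip_comm: "ipw p q = ipw q p"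
  unfolding ip_def by (simp add: mult_ac)

lemma ip_add: "ipw (p + q) r = ipw p r + ipw q r"
proof -
  have int: "set_integrable lborel {0..1} (\<lambda>y. poly p y * poly q y * w y)" for p q
    using integrable_poly_w[of "p * q"] by (simp add: mult_ac)
  have "ipw (p + q) r = (LINT y:{0..1}|lborel. poly p y * poly r y * w y + poly q y * poly r y * w y)"
    unfolding ip_def by (simp add: algebra_simps)
  also have "\<dots> = ipw p r + ipw q r"
    unfolding ip_def by (rule set_integral_add(2)[OF int int])
  finally show ?thesis .
qed

lemma ip_smult: "ipw (smult c p) q = c * ipw p q"
proof -
  have "ipw (smult c p) q = (LINT y:{0..1}|lborel. c * (poly p y * poly q y * w y))"
    unfolding ip_def by (simp add: algebra_simps)
  then show ?thesis unfolding ip_def by simp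
qed

lemma ip_diff: "ipw (p - q) r = ipw p r - ipw q r"
  using ip_add[of p "-q" r] ip_smult[of "-1" q r] by simp

lemma ip_add2: "ipw r (p + q) = ipw r p + ipw r q"
  using ip_add ip_comm by metis

lemma ip_smult2: "ipw q (smult c p) = c * ipw q p"
  using ip_smult ip_comm by metis

lemma ip_diff2: "ipw r (p - q) = ipw r p - ipw r q"
  using ip_diff ip_comm by metis

lemma ip_zero[simp]: "ipw 0 q = 0"
  unfolding ip_def by simp

lemma ip_sum: "ipw (\<Sum>k\<in>S. f k) q = (\<Sum>k\<in>S. ipw (f k) q)"
  by (induction S rule: infinite_finite_induct) (auto simp: ip_add)

lemma ip_x: "ipw ([:0, 1:] * p) q = ipw p ([:0, 1:] * q)"
  unfolding ip_def by (simp add: mult_ac)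

lemma ip_nonneg: "ipw p p \<ge> 0"
  unfolding ip_def set_lebesgue_integral_def
  by (intro integral_nonneg_AE AE_I2) (auto simp: indicator_def w_nonneg)

text \<open>The weight is strictly positive on a nondegenerate subinterval: (0,t) if A > 0,
  otherwise (t,1) since then B > 0.\<close>
lemma w_pos_on_interval: "\<exists>c d. c < d \<and> {c<..<d} \<subseteq> {0..1} \<and> (\<forall>y\<in>{c<..<d}. w y > 0)"
proof (cases "A > 0")
  case True
  then have "\<forall>y\<in>{0<..<t}. w y > 0" using t1 unfolding wt_def heaviside_def by auto
  then show ?thesis using t0 t1 by (intro exI[of _ 0] exI[of _ t]) auto
next
  case False
  then have "A = 0" "B > 0" using A AB nonzero by auto
  then have "\<forall>y\<in>{t<..<1}. w y > 0" using t0 unfolding wt_def heaviside_def by auto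
  then show ?thesis using t0 t1 by (intro exI[of _ t] exI[of _ 1]) auto
qed

text \<open>Positive definiteness: if <p,p> = 0 then p^2 w vanishes almost everywhere, so p has
  infinitely many zeros in the interval where w is positive.\<close>
lemma ip_pos: assumes "p \<noteq> 0" shows "ipw p p > 0"
proof (rule ccontr)
  assume "\<not> ipw p p > 0"
  then have zero: "ipw p p = 0" using ip_nonneg[of p] by linarith
  have int: "integrable lborel (\<lambda>y. indicator {0..1} y *\<^sub>R (poly p y * poly p y * w y))"
    using integrable_poly_w[of "p * p"] unfolding set_integrable_def by (simp add: mult_ac)
  have ae_zero: "AE y in lborel. indicator {0..1} y *\<^sub>R (poly p y * poly p y * w y) = 0"
    using zero unfolding ip_def set_lebesgue_integral_def
    by (subst (asm) integral_nonneg_eq_0_iff_AE[OF int]) (auto simp: indicator_def w_nonneg)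
  obtain c d where cd: "c < d" "{c<..<d} \<subseteq> {0..1}" "\<forall>y\<in>{c<..<d}. w y > 0"
    using w_pos_on_interval by blast
  have "AE y in lborel. y \<notin> {x. poly p x = 0}"
    by (rule AE_not_in[OF finite_imp_null_set_lborel[OF poly_roots_finite[OF assms]]])
  with ae_zero have "AE y in lborel. y \<notin> {c<..<d}"
  proof eventually_elim
    case (elim y)
    show "y \<notin> {c<..<d}"
    proof
      assume "y \<in> {c<..<d}"
      then have "y \<in> {0..1}" "w y > 0" using cd by auto
      with elim show False by (auto simp: indicator_def)
    qed
  qed
  then have "{c<..<d} \<in> null_sets lborel" by (subst AE_iff_null_sets) auto
  then show False using cd(1) by (simp add: null_sets_def)
qed

section \<open>Existence and uniqueness of the monic orthogonal polynomials\<close>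

abbreviation "mop \<equiv> is_mop al be A B t"

text \<open>A polynomial orthogonal to monic orthogonal polynomials of degrees 0..n-1 is
  orthogonal to everything of degree below n (these span that space).\<close>
lemma orth_span:
  assumes "\<forall>k<n. mop k (F k)" "\<forall>k<n. ipw p (F k) = 0" "q = 0 \<or> degree q < n"
  shows "ipw p q = 0"
  using assms
proof (induction n arbitrary: q)
  case 0
  then show ?case by (simp add: ip_comm)
next
  case (Suc m)
  define q' where "q' = q - smult (coeff q m) (F m)"
  have Fm: "degree (F m) = m" "coeff (F m) m = 1" using Suc.prems(1) unfolding is_mop_def by auto
  have dq: "degree q \<le> m" using Suc.prems(3) by auto
  have "\<forall>k\<ge>m. coeff q' k = 0"
  proof (intro allI impI)
    fix k assume "m \<le> k"
    then consider "k = m" | "k > m" by linarith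
    then show "coeff q' k = 0"
      by cases (use Fm dq in \<open>simp_all add: q'_def coeff_eq_0\<close>)
  qed
  then have "q' = 0 \<or> degree q' < m" by (rule degree_less_if_high_coeffs_zero)
  then have "ipw p q' = 0" using Suc.IH[of q'] Suc.prems by auto
  moreover have "q = q' + smult (coeff q m) (F m)" unfolding q'_def by simp
  then have "ipw p q = ipw p q' + coeff q m * ipw p (F m)"
    by (metis ip_add2 ip_smult2)
  ultimately show ?case using Suc.prems(2) by simp
qed

lemma mop_unique: assumes "mop n p1" "mop n p2" shows "p1 = p2"
proof (rule ccontr)
  assume ne: "p1 \<noteq> p2"
  define d where "d = p1 - p2"
  have "\<forall>k\<ge>n. coeff d k = 0"
    using assms unfolding is_mop_def d_def
    by (metis coeff_diff coeff_eq_0 diff_self le_neq_implies_less)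
  then have "d = 0 \<or> degree d < n" by (rule degree_less_if_high_coeffs_zero)
  then have "degree d < n" using ne unfolding d_def by auto
  then have "ipw p1 d = 0" "ipw p2 d = 0" using assms unfolding is_mop_def by auto
  then have "ipw d d = 0" unfolding d_def by (simp add: ip_diff)
  moreover have "d \<noteq> 0" using ne unfolding d_def by auto
  ultimately show False using ip_pos by fastforce
qed

lemma mop_orth:
  assumes "mop i p" "mop j q" "i \<noteq> j"
  shows "ipw p q = 0"
  using assms unfolding is_mop_def by (metis ip_comm linorder_neqE_nat)

text \<open>Gram-Schmidt: x^n minus its projections onto P_0, ..., P_(n-1) is the monic
  orthogonal polynomial of degree n.\<close>
lemma mop_exists: "\<exists>p. mop n p"
proof (induction n rule: less_induct)
  case (less n)
  define F where "F = OP al be A B t"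
  have mF: "mop k (F k)" if "k < n" for k
  proof -
    have "\<exists>!p. mop k p" using less[OF that] mop_unique by blast
    then show ?thesis unfolding F_def OP_def by (rule theI')
  qed
  define c where "c k = ipw (monom 1 n) (F k) / ipw (F k) (F k)" for k
  define p where "p = monom 1 n - (\<Sum>k<n. smult (c k) (F k))"
  have high: "coeff (\<Sum>k<n. smult (c k) (F k)) i = 0" if "i \<ge> n" for i
    unfolding coeff_sum using mF that unfolding is_mop_def
    by (auto intro!: sum.neutral simp: coeff_eq_0)
  have deg: "degree p = n"
  proof (rule antisym)
    show "degree p \<le> n"
      by (rule degree_le) (auto simp: p_def high coeff_monom)
    show "n \<le> degree p"
      by (rule le_degree) (simp add: p_def high)
  qed
  have orth: "ipw p (F j) = 0" if "j < n" for j
  proof -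
    have "(\<Sum>k<n. ipw (smult (c k) (F k)) (F j)) = (\<Sum>k<n. if k = j then c j * ipw (F j) (F j) else 0)"
      by (rule sum.cong) (auto simp: ip_smult mop_orth[OF mF mF] that)
    also have "\<dots> = c j * ipw (F j) (F j)" using that by simp
    also have "\<dots> = ipw (monom 1 n) (F j)"
    proof -
      have "F j \<noteq> 0" using mF[OF that] unfolding is_mop_def by auto
      then show ?thesis using ip_pos[of "F j"] unfolding c_def by simp
    qed
    finally show ?thesis unfolding p_def by (simp add: ip_diff ip_sum)
  qed
  have "lead_coeff p = 1" using deg by (simp add: p_def high)
  moreover have "\<forall>q. degree q < n \<longrightarrow> ipw p q = 0"
    using orth_span[of n F p] mF orth by auto
  ultimately show ?case using deg unfolding is_mop_def by blast
qed

lemma OP_mop: "mop n (OP al be A B t n)"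
proof -
  have "\<exists>!p. mop n p" using mop_exists mop_unique by blast
  then show ?thesis unfolding OP_def by (rule theI')
qed

section \<open>The three-term recurrence\<close>

abbreviation "P \<equiv> OP al be A B t"
abbreviation "h \<equiv> hh al be A B t"

lemma h_eq: "h n = ipw (P n) (P n)"
  unfolding hh_def ..

lemma degree_P: "degree (P n) = n" and lead_P: "coeff (P n) n = 1"
  using OP_mop[of n] unfolding is_mop_def by auto

lemma P_nonzero: "P n \<noteq> 0"
  using lead_P[of n] by auto

lemma h_pos: "h n > 0"
  unfolding h_eq using P_nonzero by (rule ip_pos)

lemma coeff_P_above: "k > n \<Longrightarrow> coeff (P n) k = 0"
  using degree_P coeff_eq_0 by metis

lemma orth_P: "q = 0 \<or> degree q < n \<Longrightarrow> ipw (P n) q = 0"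
  using OP_mop[of n] unfolding is_mop_def by (auto simp: ip_comm)

lemma orth_PP: "i \<noteq> j \<Longrightarrow> ipw (P i) (P j) = 0"
  by (rule mop_orth[OF OP_mop OP_mop])

lemma orth_to_P_imp_zero:
  assumes "d = 0 \<or> degree d < Suc n" "\<And>k. k < Suc n \<Longrightarrow> ipw d (P k) = 0"
  shows "d = 0"
proof -
  have "ipw d d = 0" using orth_span[of "Suc n" P d d] OP_mop assms by auto
  then show ?thesis using ip_pos by fastforce
qed

text \<open>Since x P_(n-1) - P_n has degree below n, <P_n, x P_(n-1)> = h_n.\<close>
lemma ip_P_x_P_pred: "n \<ge> 1 \<Longrightarrow> ipw ([:0, 1:] * P n) (P (n - 1)) = h n"
proof -
  assume n: "n \<ge> 1"
  define r where "r = [:0, 1:] * P (n - 1) - P n"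
  have "\<forall>k\<ge>n. coeff r k = 0"
    using n by (auto simp: r_def coeff_pCons_0 lead_P coeff_P_above le_less)
  then have "ipw (P n) r = 0" by (intro orth_P degree_less_if_high_coeffs_zero)
  then have "ipw (P n) ([:0, 1:] * P (n - 1)) = h n" by (simp add: r_def ip_diff2 h_eq)
  then show ?thesis by (metis ip_x ip_comm)
qed

text \<open>The recurrence with the coefficients given by inner products: x P_n - P_(n+1) has
  degree at most n, and only its components along P_n and P_(n-1) survive.\<close>
lemma recurrence_ip:
  assumes n: "n \<ge> 1"
  shows "[:0, 1:] * P n = P (Suc n) + smult (ipw ([:0, 1:] * P n) (P n) / h n) (P n)
           + smult (h n / h (n - 1)) (P (n - 1))"
proof -
  define a where "a = ipw ([:0, 1:] * P n) (P n) / h n"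
  define b where "b = h n / h (n - 1)"
  define d where "d = [:0, 1:] * P n - (P (Suc n) + smult a (P n) + smult b (P (n - 1)))"
  have "\<forall>k\<ge>Suc n. coeff d k = 0"
    using n by (auto simp: d_def coeff_pCons_0 lead_P coeff_P_above le_less)
  then have deg_d: "d = 0 \<or> degree d < Suc n" by (rule degree_less_if_high_coeffs_zero)
  have "ipw d (P k) = 0" if k: "k < Suc n" for k
  proof -
    have hp: "h n > 0" "h (n - 1) > 0" using h_pos by auto
    consider "k = n" | "k = n - 1" | "k < n - 1" using k n by linarith
    then show ?thesis
    proof cases
      case 1
      then show ?thesis using hp n
        by (simp add: d_def a_def ip_diff ip_add ip_smult orth_PP h_eq)
    next
      case 2
      then show ?thesis using hp n ip_P_x_P_pred[OF n]
        by (simp add: d_def b_def ip_diff ip_add ip_smult orth_PP h_eq)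
    next
      case 3
      then have "ipw ([:0, 1:] * P n) (P k) = 0"
        unfolding ip_x using n by (intro orth_P) (auto simp: degree_P P_nonzero)
      then show ?thesis using 3 n by (simp add: d_def ip_diff ip_add ip_smult orth_PP)
    qed
  qed
  then have "d = 0" using orth_to_P_imp_zero[OF deg_d] by blast
  then show ?thesis unfolding d_def a_def b_def by simp
qed

text \<open>Comparing the coefficients of x^n identifies ralpha with the inner-product
  coefficient, giving the recurrence in the form of the definitions.\<close>
lemma recurrence:
  assumes n: "n \<ge> 1"
  shows "[:0, 1:] * P n = P (Suc n) + smult (ralpha al be A B t n) (P n)
           + smult (rbeta al be A B t n) (P (n - 1))"
proof -
  define a where "a = ipw ([:0, 1:] * P n) (P n) / h n"
  have rec: "[:0, 1:] * P n = P (Suc n) + smult a (P n) + smult (h n / h (n - 1)) (OPm1 al be A B t n)"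
    using recurrence_ip[OF n] n unfolding a_def OPm1_def by simp
  have "ralpha al be A B t n = a"
    unfolding ralpha_def
  proof (rule the_equality)
    show "\<exists>b. [:0, 1:] * P n = P (Suc n) + smult a (P n) + smult b (OPm1 al be A B t n)"
      using rec by blast
    fix a' assume "\<exists>b. [:0, 1:] * P n = P (Suc n) + smult a' (P n) + smult b (OPm1 al be A B t n)"
    then obtain b where rec': "[:0, 1:] * P n = P (Suc n) + smult a' (P n) + smult b (OPm1 al be A B t n)"
      by blast
    have "coeff ([:0, 1:] * P n) n = coeff (P (Suc n)) n + a'"
      using arg_cong[OF rec', of "\<lambda>p. coeff p n"] n by (simp add: OPm1_def lead_P coeff_P_above)
    moreover have "coeff ([:0, 1:] * P n) n = coeff (P (Suc n)) n + a"
      using arg_cong[OF rec, of "\<lambda>p. coeff p n"] n by (simp add: OPm1_def lead_P coeff_P_above)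
    ultimately show "a' = a" by simp
  qed
  then show ?thesis using recurrence_ip[OF n] unfolding a_def rbeta_def by simp
qed

lemma subleading_coeff_rel:
  assumes n: "n \<ge> 1"
  shows "coeff (P n) (n - 1) = coeff (P (Suc n)) n + ralpha al be A B t n"
  using arg_cong[OF recurrence[OF n], of "\<lambda>p. coeff p n"] n
  by (simp add: coeff_pCons_0 lead_P coeff_P_above)

section \<open>Integration by parts with the jump\<close>

definition Iw :: "real poly \<Rightarrow> real" where "Iw p = ipw p 1"
definition Jw :: "real poly \<Rightarrow> real" where
  "Jw p = (LINT y:{0..1}|lborel. poly p y / (1 - y) * w y)"

lemma Iw_mult: "Iw (p * q) = ipw p q"
  unfolding Iw_def ip_def by (simp add: mult_ac)

lemma Iw_add: "Iw (p + q) = Iw p + Iw q"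
  unfolding Iw_def by (rule ip_add)

lemma Iw_smult: "Iw (smult c p) = c * Iw p"
  unfolding Iw_def by (rule ip_smult)

lemma Jw_add: "Jw (p + q) = Jw p + Jw q"
proof -
  have "Jw (p + q) = (LINT y:{0..1}|lborel. poly p y / (1 - y) * w y + poly q y / (1 - y) * w y)"
    unfolding Jw_def by (simp add: algebra_simps add_divide_distrib)
  also have "\<dots> = Jw p + Jw q"
    unfolding Jw_def by (rule set_integral_add(2)[OF integrable_poly_w_div integrable_poly_w_div])
  finally show ?thesis .
qed

lemma Jw_smult: "Jw (smult c p) = c * Jw p"
proof -
  have e: "(\<lambda>y. poly (smult c p) y / (1 - y) * w y) = (\<lambda>y. c * (poly p y / (1 - y) * w y))"
    by (rule ext) simp
  show ?thesis unfolding Jw_def e by (rule set_integral_mult_right)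
qed

lemma Jw_diff: "Jw (p - q) = Jw p - Jw q"
  using Jw_add[of p "-q"] Jw_smult[of "-1" q] by simp

text \<open>The factor 1 - y cancels (w vanishes at 1): J((1 - x) p) = I(p).\<close>
lemma Jw_one_minus_x: "Jw ([:1, -1:] * p) = Iw p"
proof -
  have "poly ([:1, -1:] * p) y / (1 - y) * w y = poly p y * poly 1 y * w y" for y
    by (cases "y = 1") (simp_all add: w_at_1 field_simps)
  then show ?thesis unfolding Jw_def Iw_def ip_def by simp
qed

lemma has_integral_Iw: "((\<lambda>y. poly p y * w y) has_integral Iw p) {0..1}"
  using set_borel_integral_eq_integral[OF integrable_poly_w[of p]]
  unfolding Iw_def ip_def by (simp add: integrable_integral)

lemma has_integral_Jw: "((\<lambda>y. poly p y / (1 - y) * w y) has_integral Jw p) {0..1}"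
  using set_borel_integral_eq_integral[OF integrable_poly_w_div[of p]]
  unfolding Jw_def by (simp add: integrable_integral)

text \<open>Integration by parts against u(y) = y^(al+1)(1-y)^be g(y), which vanishes at both
  ends; the jump of w at t contributes the boundary term.\<close>
lemma integration_by_parts:
  "be * Jw g = (1 + al + be) * Iw g + Iw ([:0, 1:] * pderiv g)
                 + B * t powr al * (1 - t) powr be * t * poly g t"
proof -
  define G where "G = smult (1 + al + be) g + [:0, 1:] * pderiv g"
  define u where "u y = y powr (al + 1) * (1 - y) powr be * poly g y" for y :: real
  define F where "F y = poly G y * y powr al * (1 - y) powr be
       - be * (poly g y / (1 - y) * (y powr al * (1 - y) powr be))" for y :: real
  have "((\<lambda>y. F y * (A + B * heaviside (y - t))) has_integral (- B * u t)) {0..1}"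
  proof (rule has_integral_jump_weight[OF t0 t1])
    show "continuous_on {0..1} u"
      unfolding u_def using al be by (intro continuous_intros continuous_on_powr') auto
    show "(u has_real_derivative F y) (at y)" if "y \<in> {0<..<1}" for y
      using jacobi_antiderivative_deriv[where g = g and al = al and be = be] that
      unfolding u_def F_def G_def by simp
    show "u 0 = 0" "u 1 = 0" unfolding u_def using al be by auto
  qed
  moreover have "F y * (A + B * heaviside (y - t)) = poly G y * w y - be * (poly g y / (1 - y) * w y)" for y
    unfolding F_def wt_def by (simp add: algebra_simps add_divide_distrib)
  ultimately have "((\<lambda>y. poly G y * w y - be * (poly g y / (1 - y) * w y)) has_integral (- B * u t)) {0..1}"
    by simp
  moreover have "((\<lambda>y. poly G y * w y - be * (poly g y / (1 - y) * w y)) has_integral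
                   (Iw G - be * Jw g)) {0..1}"
    by (intro has_integral_diff has_integral_mult_right has_integral_Iw has_integral_Jw)
  ultimately have "Iw G - be * Jw g = - B * u t" using has_integral_unique by blast
  moreover have "Iw G = (1 + al + be) * Iw g + Iw ([:0, 1:] * pderiv g)"
    unfolding G_def by (simp add: Iw_add Iw_smult)
  moreover have "u t = t * t powr al * (1 - t) powr be * poly g t"
    unfolding u_def using t0 by (simp add: powr_add)
  ultimately show ?thesis by (simp add: algebra_simps)
qed

section \<open>The ladder identities\<close>

lemma xx_Jw: "xx al be A B t k = be / h k * Jw (P k * P k)"
  unfolding xx_def Jw_def by (simp add: power2_eq_square)

lemma yy_Jw: "k \<ge> 1 \<Longrightarrow> yy al be A B t k = be / h (k - 1) * Jw (P k * P (k - 1))"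
  unfolding yy_def Jw_def by simp

text \<open>The Euler operator applied to P_m equals m P_m - p1(m) P_(m-1) modulo degree below m-1.\<close>
lemma ip_euler_P_pred:
  assumes m: "m \<ge> 1"
  shows "ipw ([:0, 1:] * pderiv (P m)) (P (m - 1)) = - coeff (P m) (m - 1) * h (m - 1)"
proof -
  define p1 where "p1 = coeff (P m) (m - 1)"
  define D where "D = [:0, 1:] * pderiv (P m) - smult (of_nat m) (P m) + smult p1 (P (m - 1))"
  have "\<forall>k\<ge>m - 1. coeff D k = 0"
  proof (intro allI impI)
    fix k assume "m - 1 \<le> k"
    then consider "k = m - 1" | "k = m" | "k > m" by linarith
    then show "coeff D k = 0"
      by cases (use m in \<open>simp_all add: D_def p1_def coeff_x_pderiv lead_P coeff_P_above
                                       algebra_simps of_nat_diff\<close>)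
  qed
  then have "ipw D (P (m - 1)) = 0"
    by (subst ip_comm, intro orth_P degree_less_if_high_coeffs_zero)
  then show ?thesis using m
    by (simp add: D_def p1_def ip_add ip_diff ip_smult orth_PP h_eq)
qed

lemma ip_P_euler_pred: "m \<ge> 1 \<Longrightarrow> ipw (P m) ([:0, 1:] * pderiv (P (m - 1))) = 0"
  by (intro orth_P degree_less_if_high_coeffs_zero) (auto simp: coeff_x_pderiv coeff_P_above)

text \<open>Integration by parts applied to P_m P_(m-1): y_m = t r_m - p1(m).\<close>
lemma yy_eq:
  assumes m: "m \<ge> 1"
  shows "yy al be A B t m = t * rr al be A B t m - coeff (P m) (m - 1)"
proof -
  define g where "g = P m * P (m - 1)"
  have "Iw g = 0" unfolding g_def Iw_mult using orth_PP m by simp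
  moreover have "Iw ([:0, 1:] * pderiv g) = - coeff (P m) (m - 1) * h (m - 1)"
  proof -
    have "[:0, 1:] * pderiv g = ([:0, 1:] * pderiv (P m)) * P (m - 1) + P m * ([:0, 1:] * pderiv (P (m - 1)))"
      unfolding g_def by (simp add: pderiv_mult algebra_simps)
    then show ?thesis using ip_euler_P_pred[OF m] ip_P_euler_pred[OF m] by (simp only: Iw_add Iw_mult)
  qed
  ultimately have "be * Jw g = - coeff (P m) (m - 1) * h (m - 1)
      + B * t powr al * (1 - t) powr be * t * (poly (P m) t * poly (P (m - 1)) t)"
    using integration_by_parts[of g] unfolding g_def by simp
  then show ?thesis
    unfolding yy_Jw[OF m] rr_def g_def using m h_pos[of "m - 1"] by (simp add: field_simps)
qed

lemma first_identity:
  assumes n: "n \<ge> 1"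
  shows "(t - ralpha al be A B t n) * (rr al be A B t (n + 1) - rr al be A B t n)
           = rbeta al be A B t (n + 1) * RR al be A B t (n + 1) - rbeta al be A B t n * RR al be A B t (n - 1)"
proof -
  have "t * poly (P n) t = poly (P (Suc n)) t + ralpha al be A B t n * poly (P n) t
          + h n / h (n - 1) * poly (P (n - 1)) t"
    using arg_cong[OF recurrence[OF n], of "\<lambda>p. poly p t"] by (simp add: rbeta_def)
  from rearrange_first[OF h_pos h_pos h_pos this, of "B * t powr al * (1 - t) powr be"]
  show ?thesis unfolding rr_def RR_def rbeta_def using n by (simp add: mult_ac)
qed

text \<open>Multiplying the recurrence by be_n P_(n-1) - P_(n+1) and using J((1-x) p) = I(p):
  only the squares of P_(n-1) and P_(n+1) survive on the right.\<close>
lemma second_identity_J: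
  assumes n: "n \<ge> 1"
  shows "(1 - ralpha al be A B t n) * (h n / h (n - 1) * Jw (P n * P (n - 1)) - Jw (P n * P (Suc n)))
     = (h n / h (n - 1))\<^sup>2 * Jw (P (n - 1) * P (n - 1)) - Jw (P (Suc n) * P (Suc n))"
proof -
  define a where "a = ralpha al be A B t n"
  define b where "b = h n / h (n - 1)"
  define Q where "Q = smult b (P (n - 1)) - P (Suc n)"
  have rec: "[:0, 1:] * P n = P (Suc n) + smult a (P n) + smult b (P (n - 1))"
    using recurrence[OF n] unfolding a_def b_def rbeta_def by simp
  have split: "smult (1 - a) (P n * Q)
      = [:1, -1:] * (P n * Q) + smult (b\<^sup>2) (P (n - 1) * P (n - 1)) - P (Suc n) * P (Suc n)"
  proof (rule iffD1[OF poly_eq_poly_eq_iff], rule ext)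
    fix y :: real
    have "y * poly (P n) y = poly (P (Suc n)) y + a * poly (P n) y + b * poly (P (n - 1)) y"
      using arg_cong[OF rec, of "\<lambda>p. poly p y"] by simp
    then show "poly (smult (1 - a) (P n * Q)) y
      = poly ([:1, -1:] * (P n * Q) + smult (b\<^sup>2) (P (n - 1) * P (n - 1)) - P (Suc n) * P (Suc n)) y"
      by (simp only: Q_def poly_smult poly_mult poly_diff poly_add poly_pCons poly_0
          mult_zero_right add_0_right) algebra
  qed
  have "Jw ([:1, -1:] * (P n * Q)) = 0"
    unfolding Jw_one_minus_x Iw_mult Q_def using n by (simp add: ip_diff2 ip_smult2 orth_PP)
  then have "Jw (smult (1 - a) (P n * Q)) = b\<^sup>2 * Jw (P (n - 1) * P (n - 1)) - Jw (P (Suc n) * P (Suc n))"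
    unfolding split by (simp add: Jw_add Jw_diff Jw_smult)
  moreover have "P n * Q = smult b (P n * P (n - 1)) - P n * P (Suc n)"
    unfolding Q_def by (simp add: algebra_simps)
  ultimately show ?thesis unfolding a_def b_def by (simp add: Jw_smult Jw_diff)
qed

lemma second_identity:
  assumes n: "n \<ge> 1"
  shows "(1 - ralpha al be A B t n) * (yy al be A B t n - yy al be A B t (n + 1))
           = rbeta al be A B t n * xx al be A B t (n - 1) - rbeta al be A B t (n + 1) * xx al be A B t (n + 1)"
proof -
  have "yy al be A B t (n + 1) = be / h n * Jw (P n * P (Suc n))"
    using yy_Jw[of "n + 1"] by (simp add: mult.commute)
  then show ?thesis
    unfolding yy_Jw[OF n] xx_Jw rbeta_def
    using rearrange_second[OF h_pos h_pos h_pos second_identity_J[OF n]] by simp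
qed

lemma ralpha_via_yy_rr:
  assumes n: "n \<ge> 1"
  shows "ralpha al be A B t n
           = (yy al be A B t (n + 1) - yy al be A B t n) - t * (rr al be A B t (n + 1) - rr al be A B t n)"
  using yy_eq[OF n] yy_eq[of "n + 1"] subleading_coeff_rel[OF n] by (simp add: algebra_simps)

lemma third_identity:
  assumes n: "n \<ge> 1"
  shows "- ralpha al be A B t n * (yy al be A B t (n + 1) - yy al be A B t n + rr al be A B t n - rr al be A B t (n + 1) - 1)
           = rbeta al be A B t (n + 1) * xx al be A B t (n + 1) - rbeta al be A B t n * xx al be A B t (n - 1)
             + rbeta al be A B t n * RR al be A B t (n - 1) - rbeta al be A B t (n + 1) * RR al be A B t (n + 1)"
  by (rule rearrange_third[OF first_identity[OF n] second_identity[OF n] ralpha_via_yy_rr[OF n]])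

end

theorem mainTheorem6:
  fixes al be A B t :: real and n :: nat
  assumes "al > 0" "be > 0" "A \<ge> 0" "A + B \<ge> 0" "\<not> (A = 0 \<and> B = 0)"
    and "0 < t" "t < 1" "n \<ge> 1"
  shows "((t - ralpha al be A B t n) * (rr al be A B t (n + 1) - rr al be A B t n)
           = rbeta al be A B t (n + 1) * RR al be A B t (n + 1) - rbeta al be A B t n * RR al be A B t (n - 1)) \<and>
         ((1 - ralpha al be A B t n) * (yy al be A B t n - yy al be A B t (n + 1))
           = rbeta al be A B t n * xx al be A B t (n - 1) - rbeta al be A B t (n + 1) * xx al be A B t (n + 1)) \<and>
         (- ralpha al be A B t n * (yy al be A B t (n + 1) - yy al be A B t n + rr al be A B t n - rr al be A B t (n + 1) - 1)
           = rbeta al be A B t (n + 1) * xx al be A B t (n + 1) - rbeta al be A B t n * xx al be A B t (n - 1)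
             + rbeta al be A B t n * RR al be A B t (n - 1) - rbeta al be A B t (n + 1) * RR al be A B t (n + 1))"
proof -
  interpret jump_jacobi al be A B t
    using assms by unfold_locales auto
  show ?thesis
    using first_identity second_identity third_identity \<open>n \<ge> 1\<close> by blast
qed

end
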